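(* Consider Algorithm 3 (described in the context) under the Standing Assumption, Matrix Assumption, Gradient Assumption and the event $E_{\tau,small}$ assumption of the context. Then for all $k\ge\bar k_{\tau,\xi}$, $$\mathbb{E}_{k,\tau,small}[\Delta q(x_k,\bar\tau_k,\bar g_k,H_k,\bar d_k)]\le\Delta q(x_k,\bar\tau_{\min},g_k,H_k,d_k)+\bar\tau_{\min}\zeta^{-1}M.$$
   Context: Problem: $\min_x f(x)$ s.t. $c(x)=0$, $f(x)=\mathbb{E}[F(x,\omega)]$, $c:\mathbb{R}^n\to\mathbb{R}^m$ deterministic. Notation: $g_k=\nabla f(x_k)$, $c_k=c(x_k)$, $J_k=\nabla c(x_k)^T$; $\Delta q(x,\tau,g,H,d)=-\tau(g^Td+\frac12\max\{d^THd,0\})+\|c(x)\|_1$. Standing Assumption: an open convex set $\mathcal X$ contains all iterates; $f$ is $C^1$, bounded below on $\mathcal X$, $\nabla f$ bounded and $L$-Lipschitz on $\mathcal X$; $c$, $\nabla c^T$ bounded on $\mathcal X$; $\nabla c_i$ is $\gamma_i$-Lipschitz on $\mathcal X$; singular values of $\nabla c(x)^T$ bounded away from zero uniformly over $\mathcal X$; $\Gamma:=\sum_i\gamma_i$. Matrix Assumption: deterministic symmetric $H_k$, chosen independently of the stochastic gradients, with $\|H_k\|_2\le\kappa_H$ and $u^TH_ku\ge\zeta\|u\|_2^2$ whenever $J_ku=0$. Algorithm 3 (inputs $x_0$, $\bar\tau_{-1}>0$, $\epsilon,\sigma\in(0,1)$, $\bar\xi_{-1}>0$, $\{\beta_k\}\subset(0,1]$,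 $\theta\ge0$): at iteration $k$, obtain stochastic gradient $\bar g_k$; $(\bar d_k,\bar y_k)$ solves $H_k\bar d_k+J_k^T\bar y_k=-\bar g_k$, $J_k\bar d_k=-c_k$ (assumed $\bar d_k\neq0$). $\bar\tau_k^{trial}=\infty$ if $\bar g_k^T\bar d_k+\max\{\bar d_k^TH_k\bar d_k,0\}\le0$, else $\frac{(1-\sigma)\|c_k\|_1}{\bar g_k^T\bar d_k+\max\{\bar d_k^TH_k\bar d_k,0\}}$; $\bar\tau_k=\bar\tau_{k-1}$ if $\bar\tau_{k-1}\le\bar\tau_k^{trial}$, else $(1-\epsilon)\bar\tau_k^{trial}$. $\bar\xi_k^{trial}=\frac{\Delta q(x_k,\bar\tau_k,\bar g_k,H_k,\bar d_k)}{\bar\tau_k\|\bar d_k\|_2^2}$; $\bar\xi_k=\bar\xi_{k-1}$ if $\bar\xi_{k-1}\le\bar\xi_k^{trial}$, else $(1-\epsilon)\bar\xi_k^{trial}$. With $D_k=(\bar\tau_kL+\Gamma)\|\bar d_k\|_2^2$, $\hat a_k=\beta_k\Delta q(x_k,\bar\tau_k,\bar g_k,H_k,\bar d_k)/D_k$, $\tilde a_k=\hat a_k-4\|c_k\|_1/D_k$, project both onto $[a_k,a_k+\theta\beta_k^2]$ with $a_k=\frac{\beta_k\bar\xi_k\bar\tau_k}{\bar\tau_kL+\Gamma}$ to get $\widehat\alpha_k,\widetilde\alpha_k$; $\bar\alpha_k=\widehat\alpha_k$ if $\widehat\alpha_k<1$, $1$ if $\widetilde\alpha_k\le1\le\widehat\alpha_k$,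 $\widetilde\alpha_k$ if $\widetilde\alpha_k>1$; $x_{k+1}=x_k+\bar\alpha_k\bar d_k$. $\bar\xi_{\min}$ denotes the limit of the nonincreasing positive sequence $\{\bar\xi_k\}$. Gradient Assumption: $\mathbb{E}_k[\bar g_k]=g_k$, $\mathbb{E}_k[\|\bar g_k-g_k\|_2^2]\le M$, with $\mathbb{E}_k$ conditioned on reaching $x_k$ at iteration $k$. Deterministic counterparts: $(d_k,y_k)$ solves $H_kd_k+J_k^Ty_k=-g_k$, $J_kd_k=-c_k$; $\tau_k^{trial}=\infty$ if $g_k^Td_k+\max\{d_k^TH_kd_k,0\}\le0$, else $\frac{(1-\sigma)\|c_k\|_1}{g_k^Td_k+\max\{d_k^TH_kd_k,0\}}$. Event $E_{\tau,small}$ assumption: there exist $\bar k_{\tau,\xi}\in\mathbb{N}$ and $\bar\tau_{\min}>0$ with $\bar\tau_k=\bar\tau_{\min}\le\tau_k^{trial}$ and $\bar\xi_k=\bar\xi_{\min}$ for all $k\ge\bar k_{\tau,\xi}$; moreover for $k\ge\bar k_{\tau,\xi}$, $\mathbb{E}_{k,\tau,small}[\bar g_k]=g_k$ and $\mathbb{E}_{k,\tau,small}[\|\bar g_k-g_k\|_2^2]\le M$, where $\mathbb{E}_{k,\tau,small}$ is expectation w.r.t. $\omega$ conditioned on this event and on the algorithm having reached $x_k$ at iteration $k$. *)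

theory Defs
  imports "HOL-Analysis.Analysis" "HOL-Probability.Probability"
begin

definition l1norm :: "real^'m \<Rightarrow> real" where
  "l1norm v = (\<Sum>i\<in>UNIV. \<bar>v $ i\<bar>)"

definition delta_q ::
  "(real^'n \<Rightarrow> real^'m) \<Rightarrow> real^'n \<Rightarrow> real \<Rightarrow> real^'n \<Rightarrow> real^'n^'n \<Rightarrow> real^'n \<Rightarrow> real" where
  "delta_q c x tau g H d = - tau * (g \<bullet> d + 1/2 * max (d \<bullet> (H *v d)) 0) + l1norm (c x)"

definition tau_trial ::
  "real \<Rightarrow> real^'m \<Rightarrow> real^'n \<Rightarrow> real^'n^'n \<Rightarrow> real^'n \<Rightarrow> ereal" where
  "tau_trial sig cx g H d =
     (if g \<bullet> d + max (d \<bullet> (H *v d)) 0 \<le> 0 then \<infinity>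
      else ereal ((1 - sig) * l1norm cx / (g \<bullet> d + max (d \<bullet> (H *v d)) 0)))"

end

theory Submission
  imports Defs
begin

text \<open>
  Write the stochastic step as D = d + u and the stochastic gradient as G = g + e. The two KKT
  systems share their constraint rows, so J u = 0 and H u + J^T z = -e; curvature of H on the
  null space of J then gives 0 \<le> u^T H u = -e^T u \<le> |e|^2/\<zeta>. Expanding
  G^T D + 1/2 max(D^T H D, 0) around (g, d) leaves, apart from this quadratic term, only terms
  linear in e: e^T d and, when d^T H d < 0 (so that the cross term 2 d^T H u = -2 g^T u is cut off
  by the max), g^T u = -p^T e, where (p, q) solves the (nonsingular) KKT system with right-hand
  side (g, 0). Taking expectations removes the linear terms and bounds the quadratic
  one by M/\<zeta>.
\<close>

lemma inner_transpose_matrix_vector: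
  fixes J :: "real^'n^'m"
  shows "u \<bullet> (transpose J *v z) = (J *v u) \<bullet> z"
  by (metis dot_lmul_matrix inner_commute transpose_matrix_vector)

lemma inner_matrix_vector_symmetric:
  fixes H :: "real^'n^'n"
  assumes "transpose H = H"
  shows "u \<bullet> (H *v v) = v \<bullet> (H *v u)"
  by (metis assms dot_lmul_matrix inner_commute transpose_matrix_vector)

lemma kkt_inner_null_space:
  fixes H :: "real^'n^'n" and J :: "real^'n^'m"
  assumes "J *v u = 0" and "H *v v + transpose J *v w = r"
  shows "u \<bullet> (H *v v) = u \<bullet> r"
  using assms by (auto simp: inner_add_right inner_transpose_matrix_vector simp del: transpose_matrix_vector)

lemma kkt_system_solvable:
  fixes H :: "real^'n^'n" and J :: "real^'n^'m"
  assumes pos: "\<And>u. J *v u = 0 \<Longrightarrow> u \<noteq> 0 \<Longrightarrow> 0 < u \<bullet> (H *v u)"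
    and inj: "\<And>v. transpose J *v v = 0 \<Longrightarrow> v = 0"
  shows "\<exists>p q. H *v p + transpose J *v q = r \<and> J *v p = h"
proof -
  define K where "K = (\<lambda>(u::real^'n, v::real^'m). (H *v u + transpose J *v v, J *v u))"
  have lin: "linear K"
    unfolding K_def
    by (rule linearI) (auto simp: matrix_vector_right_distrib matrix_vector_mult_scaleR
        scaleR_right_distrib simp del: transpose_matrix_vector)
  have "inj K"
    unfolding linear_injective_0[OF lin]
  proof (intro allI impI)
    fix uv assume "K uv = 0"
    then obtain u v where uv: "uv = (u, v)" and eq: "H *v u + transpose J *v v = 0" and Ju: "J *v u = 0"
      unfolding K_def by (cases uv) (auto simp: zero_prod_def)
    have "u \<bullet> (H *v u) = 0"
      using kkt_inner_null_space[OF Ju eq] by simp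
    then have "u = 0"
      using pos Ju by force
    then have "v = 0"
      using eq inj by simp
    with uv \<open>u = 0\<close> show "uv = 0"
      by (simp add: zero_prod_def)
  qed
  then have "surj K"
    using lin linear_injective_imp_surjective by blast
  then obtain uv where "K uv = (r, h)"
    by (metis surjD)
  then show ?thesis
    unfolding K_def by (cases uv) auto
qed

lemma null_space_step_bound:
  fixes H :: "real^'n^'n" and J :: "real^'n^'m"
  assumes curv: "\<And>u. J *v u = 0 \<Longrightarrow> \<zeta> * (norm u)\<^sup>2 \<le> u \<bullet> (H *v u)" and "0 < \<zeta>"
    and Ju: "J *v u = 0" and eq: "H *v u + transpose J *v z = - e"
  shows "0 \<le> u \<bullet> (H *v u)" and "u \<bullet> (H *v u) \<le> (norm e)\<^sup>2 / \<zeta>"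
proof -
  have lower: "\<zeta> * (norm u)\<^sup>2 \<le> u \<bullet> (H *v u)"
    using curv Ju .
  have upper: "u \<bullet> (H *v u) \<le> norm u * norm e"
    using kkt_inner_null_space[OF Ju eq] Cauchy_Schwarz_ineq2[of u e] by simp
  show "0 \<le> u \<bullet> (H *v u)"
    using lower \<open>0 < \<zeta>\<close> by (smt (verit) mult_nonneg_nonneg zero_le_power2)
  have "norm u \<le> norm e / \<zeta>"
  proof (cases "u = 0")
    case False
    have "\<zeta> * norm u * norm u \<le> norm e * norm u"
      using lower upper by (simp add: power2_eq_square mult.commute mult.left_commute)
    then have "\<zeta> * norm u \<le> norm e"
      using False by (simp add: mult_right_le_imp_le)
    then show ?thesis
      using \<open>0 < \<zeta>\<close> by (simp add: field_simps)
  qed (use \<open>0 < \<zeta>\<close> in simp)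
  then have "norm u * norm e \<le> norm e / \<zeta> * norm e"
    by (rule mult_right_mono) simp
  with upper show "u \<bullet> (H *v u) \<le> (norm e)\<^sup>2 / \<zeta>"
    by (simp add: power2_eq_square)
qed

lemma kkt_perturbed_model_lower_bound:
  fixes H :: "real^'n^'n" and J :: "real^'n^'m"
  assumes sym: "transpose H = H"
    and curv: "\<And>u. J *v u = 0 \<Longrightarrow> \<zeta> * (norm u)\<^sup>2 \<le> u \<bullet> (H *v u)" and "0 < \<zeta>"
    and det: "H *v d + transpose J *v y = - g" "J *v d = - cx"
    and adj: "H *v p + transpose J *v q = g" "J *v p = 0"
    and st: "H *v D + transpose J *v Y = - G" "J *v D = - cx"
  shows "g \<bullet> d + 1/2 * max (d \<bullet> (H *v d)) 0
           + (if 0 \<le> d \<bullet> (H *v d) then d else d - p) \<bullet> (G - g) - (norm (G - g))\<^sup>2 / \<zeta>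
         \<le> G \<bullet> D + 1/2 * max (D \<bullet> (H *v D)) 0"
proof -
  define u e where "u = D - d" and "e = G - g"
  have Ju: "J *v u = 0"
    unfolding u_def using det st by (simp add: matrix_vector_mult_diff_distrib)
  have Hu: "H *v u + transpose J *v (Y - y) = - e"
    unfolding u_def e_def using det st
    by (simp add: matrix_vector_mult_diff_distrib algebra_simps del: transpose_matrix_vector)
  have uHu: "u \<bullet> (H *v u) = - (e \<bullet> u)"
    using kkt_inner_null_space[OF Ju Hu] by (simp add: inner_commute)
  have dHu: "d \<bullet> (H *v u) = - (g \<bullet> u)"
    using kkt_inner_null_space[OF Ju det(1)] inner_matrix_vector_symmetric[OF sym, of d u]
    by (simp add: inner_commute)
  have gu: "g \<bullet> u = - (p \<bullet> e)"
    using kkt_inner_null_space[OF Ju adj(1)] kkt_inner_null_space[OF adj(2) Hu]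
      inner_matrix_vector_symmetric[OF sym, of u p]
    by (simp add: inner_commute)
  have uHu_bounds: "0 \<le> u \<bullet> (H *v u)" "u \<bullet> (H *v u) \<le> (norm e)\<^sup>2 / \<zeta>"
    using null_space_step_bound[OF curv \<open>0 < \<zeta>\<close> Ju Hu] by auto
  have GD: "G \<bullet> D = g \<bullet> d + g \<bullet> u + e \<bullet> d + e \<bullet> u"
    unfolding u_def e_def by (simp add: algebra_simps)
  have DHD: "D \<bullet> (H *v D) = d \<bullet> (H *v d) + 2 * (d \<bullet> (H *v u)) + u \<bullet> (H *v u)"
    unfolding u_def using inner_matrix_vector_symmetric[OF sym, of "D - d" d]
    by (simp add: matrix_vector_mult_diff_distrib algebra_simps)
  show ?thesis
  proof (cases "0 \<le> d \<bullet> (H *v d)")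
    case True
    then show ?thesis
      using GD DHD uHu dHu uHu_bounds unfolding e_def[symmetric]
      by (auto simp: inner_commute max_def field_simps)
  next
    case False
    then show ?thesis
      using GD gu uHu uHu_bounds unfolding e_def[symmetric]
      by (auto simp: inner_diff_right inner_commute max_def)
  qed
qed

lemma delta_q_perturbation_bound:
  fixes c :: "real^'n \<Rightarrow> real^'m" and H :: "real^'n^'n" and J :: "real^'n^'m"
  assumes sym: "transpose H = H"
    and curv: "\<And>u. J *v u = 0 \<Longrightarrow> \<zeta> * (norm u)\<^sup>2 \<le> u \<bullet> (H *v u)" and "0 < \<zeta>"
    and inj: "\<And>v. transpose J *v v = 0 \<Longrightarrow> v = 0"
    and "0 \<le> \<tau>"
    and det: "H *v d + transpose J *v y = - g" "J *v d = - c x"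
  shows "\<exists>a. \<forall>G D Y. H *v D + transpose J *v Y = - G \<and> J *v D = - c x \<longrightarrow>
           delta_q c x \<tau> G H D \<le> delta_q c x \<tau> g H d + a \<bullet> (G - g) + \<tau> / \<zeta> * (norm (G - g))\<^sup>2"
proof -
  have "0 < u \<bullet> (H *v u)" if "J *v u = 0" "u \<noteq> 0" for u
    using curv[OF \<open>J *v u = 0\<close>] \<open>u \<noteq> 0\<close> \<open>0 < \<zeta>\<close>
    by (smt (verit) mult_pos_pos zero_less_norm_iff zero_less_power)
  then obtain p q where adj: "H *v p + transpose J *v q = g" "J *v p = 0"
    using kkt_system_solvable inj by blast
  define a where "a = (if 0 \<le> d \<bullet> (H *v d) then d else d - p)"
  have "delta_q c x \<tau> G H D \<le> delta_q c x \<tau> g H d + (- \<tau> *\<^sub>R a) \<bullet> (G - g) + \<tau> / \<zeta> * (norm (G - g))\<^sup>2"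
    if "H *v D + transpose J *v Y = - G" "J *v D = - c x" for G D Y
  proof -
    have "\<tau> * (g \<bullet> d + 1/2 * max (d \<bullet> (H *v d)) 0 + a \<bullet> (G - g) - (norm (G - g))\<^sup>2 / \<zeta>)
          \<le> \<tau> * (G \<bullet> D + 1/2 * max (D \<bullet> (H *v D)) 0)"
      using kkt_perturbed_model_lower_bound[OF sym curv \<open>0 < \<zeta>\<close> det adj that] \<open>0 \<le> \<tau>\<close>
      unfolding a_def by (rule mult_left_mono)
    then show ?thesis
      unfolding delta_q_def by (simp add: algebra_simps)
  qed
  then show ?thesis
    by blast
qed

lemma l1norm_nonneg: "0 \<le> l1norm v"
  unfolding l1norm_def by (simp add: sum_nonneg)

lemma delta_q_nonneg_if_tau_le_trial:
  assumes trial: "ereal \<tau> \<le> tau_trial \<sigma> (c x) g H d" and "0 \<le> \<tau>" and "0 \<le> \<sigma>"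
  shows "0 \<le> delta_q c x \<tau> g H d"
proof -
  define denom where "denom = g \<bullet> d + max (d \<bullet> (H *v d)) 0"
  have "\<tau> * (g \<bullet> d + 1/2 * max (d \<bullet> (H *v d)) 0) \<le> \<tau> * denom"
    unfolding denom_def using \<open>0 \<le> \<tau>\<close> by (intro mult_left_mono) auto
  also have "\<dots> \<le> l1norm (c x)"
  proof (cases "denom \<le> 0")
    case True
    then show ?thesis
      using \<open>0 \<le> \<tau>\<close> l1norm_nonneg[of "c x"] by (smt (verit) mult_nonneg_nonpos)
  next
    case False
    then have "\<tau> \<le> (1 - \<sigma>) * l1norm (c x) / denom"
      using trial unfolding tau_trial_def denom_def[symmetric] by simp
    then have "\<tau> * denom \<le> (1 - \<sigma>) * l1norm (c x)"
      using False by (simp add: field_simps)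
    also have "\<dots> \<le> l1norm (c x)"
      using \<open>0 \<le> \<sigma>\<close> l1norm_nonneg[of "c x"] by (simp add: algebra_simps)
    finally show ?thesis .
  qed
  finally show ?thesis
    unfolding delta_q_def by simp
qed

lemma (in prob_space) expectation_le_of_unbiased_quadratic_bound:
  fixes G :: "'a \<Rightarrow> 'b::euclidean_space"
  assumes G_int: "integrable M G" and G_mean: "expectation G = g"
    and var_int: "integrable M (\<lambda>w. (norm (G w - g))\<^sup>2)"
    and var_le: "expectation (\<lambda>w. (norm (G w - g))\<^sup>2) \<le> V"
    and bound: "\<And>w. w \<in> space M \<Longrightarrow> F w \<le> b + a \<bullet> (G w - g) + K * (norm (G w - g))\<^sup>2"
    and "0 \<le> K" and "0 \<le> b"
  shows "expectation F \<le> b + K * V"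
proof (cases "integrable M F")
  case True
  have dev_int: "integrable M (\<lambda>w. G w - g)"
    using G_int by simp
  have "expectation (\<lambda>w. a \<bullet> (G w - g)) = 0"
    using dev_int G_int G_mean by (simp add: prob_space)
  then have "expectation (\<lambda>w. b + a \<bullet> (G w - g) + K * (norm (G w - g))\<^sup>2)
      = b + K * expectation (\<lambda>w. (norm (G w - g))\<^sup>2)"
    using dev_int var_int by (simp add: prob_space)
  moreover have "expectation F \<le> expectation (\<lambda>w. b + a \<bullet> (G w - g) + K * (norm (G w - g))\<^sup>2)"
    using True dev_int var_int bound by (intro integral_mono) auto
  ultimately show ?thesis
    using var_le \<open>0 \<le> K\<close> by (smt (verit) mult_left_mono)
next
  \<comment> \<open>the Bochner integral of a non-integrable function is 0, so here b \<ge> 0 is needed\<close>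
  case False
  have "0 \<le> expectation (\<lambda>w. (norm (G w - g))\<^sup>2)"
    by (rule Bochner_Integration.integral_nonneg) simp
  with var_le have "0 \<le> V"
    by linarith
  with False show ?thesis
    using \<open>0 \<le> K\<close> \<open>0 \<le> b\<close> by (simp add: not_integrable_integral_eq)
qed

theorem lemma3p11:
  fixes f :: "real^'n \<Rightarrow> real" and gradf :: "real^'n \<Rightarrow> real^'n"
    and c :: "real^'n \<Rightarrow> real^'m" and Jc :: "real^'n \<Rightarrow> real^'n^'m"
    and X :: "(real^'n) set" and \<gamma> :: "'m \<Rightarrow> real"
    and L \<Gamma> \<kappa>H \<zeta> \<sigma> Mv \<tau>min :: real
    and x d :: "nat \<Rightarrow> real^'n" and y :: "nat \<Rightarrow> real^'m"
    and H :: "nat \<Rightarrow> real^'n^'n" and J :: "nat \<Rightarrow> real^'n^'m"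
    and P :: "nat \<Rightarrow> 'w measure"
    and G D :: "nat \<Rightarrow> 'w \<Rightarrow> real^'n" and Y :: "nat \<Rightarrow> 'w \<Rightarrow> real^'m"
    and kbar :: nat
  assumes
    \<comment> \<open>Standing Assumption\<close>
    X_open: "open X" and X_convex: "convex X" and x_in_X: "\<forall>k. x k \<in> X"
    and f_deriv: "\<forall>z\<in>X. (f has_derivative (\<lambda>v. gradf z \<bullet> v)) (at z)"
    and gradf_cont: "continuous_on X gradf"
    and f_bdd_below: "\<exists>b. \<forall>z\<in>X. b \<le> f z"
    and gradf_bdd: "bounded (gradf ` X)"
    and gradf_lip: "\<forall>u\<in>X. \<forall>v\<in>X. norm (gradf u - gradf v) \<le> L * norm (u - v)"
    and c_deriv: "\<forall>z\<in>X. (c has_derivative (\<lambda>v. Jc z *v v)) (at z)"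
    and c_bdd: "bounded (c ` X)" and Jc_bdd: "bounded (Jc ` X)"
    and gradc_lip: "\<forall>i. \<forall>u\<in>X. \<forall>v\<in>X. norm (row i (Jc u) - row i (Jc v)) \<le> \<gamma> i * norm (u - v)"
    and Gamma_def: "\<Gamma> = (\<Sum>i\<in>UNIV. \<gamma> i)"
    and sing_vals: "\<exists>s>0. \<forall>z\<in>X. \<forall>v. s * norm v \<le> norm (transpose (Jc z) *v v)"
    \<comment> \<open>Algorithm parameter\<close>
    and sigma_range: "0 < \<sigma>" "\<sigma> < 1"
    \<comment> \<open>Matrix Assumption\<close>
    and J_def: "\<forall>k. J k = Jc (x k)"
    and H_sym: "\<forall>k. transpose (H k) = H k"
    and H_norm: "\<forall>k. onorm (\<lambda>v. H k *v v) \<le> \<kappa>H"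
    and zeta_pos: "0 < \<zeta>"
    and H_curv: "\<forall>k u. J k *v u = 0 \<longrightarrow> \<zeta> * (norm u)\<^sup>2 \<le> u \<bullet> (H k *v u)"
    \<comment> \<open>deterministic search directions\<close>
    and det_dir: "\<forall>k. H k *v d k + transpose (J k) *v y k = - gradf (x k)
                       \<and> J k *v d k = - c (x k)"
    \<comment> \<open>Event E_tau,small, conditional distribution at iteration k >= kbar\<close>
    and tau_pos: "0 < \<tau>min"
    and tau_le_trial: "\<forall>k\<ge>kbar. ereal \<tau>min \<le> tau_trial \<sigma> (c (x k)) (gradf (x k)) (H k) (d k)"
    and prob: "\<forall>k\<ge>kbar. prob_space (P k)"
    and G_meas: "\<forall>k\<ge>kbar. G k \<in> borel_measurable (P k)"
    and G_int: "\<forall>k\<ge>kbar. integrable (P k) (G k)"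
    and G_unbiased: "\<forall>k\<ge>kbar. integral\<^sup>L (P k) (G k) = gradf (x k)"
    and G_var_int: "\<forall>k\<ge>kbar. integrable (P k) (\<lambda>w. (norm (G k w - gradf (x k)))\<^sup>2)"
    and G_var: "\<forall>k\<ge>kbar. integral\<^sup>L (P k) (\<lambda>w. (norm (G k w - gradf (x k)))\<^sup>2) \<le> Mv"
    and stoch_dir: "\<forall>k\<ge>kbar. \<forall>w\<in>space (P k).
                      H k *v D k w + transpose (J k) *v Y k w = - G k w
                      \<and> J k *v D k w = - c (x k) \<and> D k w \<noteq> 0"
  shows "\<forall>k\<ge>kbar.
           integral\<^sup>L (P k) (\<lambda>w. delta_q c (x k) \<tau>min (G k w) (H k) (D k w))
             \<le> delta_q c (x k) \<tau>min (gradf (x k)) (H k) (d k) + \<tau>min / \<zeta> * Mv"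
proof (intro allI impI)
  fix k assume "kbar \<le> k"
  interpret prob_space "P k"
    using prob \<open>kbar \<le> k\<close> by blast
  obtain s where "0 < s" and s: "\<forall>v. s * norm v \<le> norm (transpose (J k) *v v)"
    using sing_vals x_in_X J_def by metis
  have inj: "v = 0" if "transpose (J k) *v v = 0" for v
    using s[rule_format, of v] that \<open>0 < s\<close> by (simp add: mult_le_0_iff)
  obtain a where a: "\<forall>G D Y. H k *v D + transpose (J k) *v Y = - G \<and> J k *v D = - c (x k) \<longrightarrow>
      delta_q c (x k) \<tau>min G (H k) D
        \<le> delta_q c (x k) \<tau>min (gradf (x k)) (H k) (d k) + a \<bullet> (G - gradf (x k))
           + \<tau>min / \<zeta> * (norm (G - gradf (x k)))\<^sup>2"
    using delta_q_perturbation_bound[OF H_sym[rule_format] _ zeta_pos inj] H_curv tau_pos det_dir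
    by (metis less_imp_le)
  show "expectation (\<lambda>w. delta_q c (x k) \<tau>min (G k w) (H k) (D k w))
      \<le> delta_q c (x k) \<tau>min (gradf (x k)) (H k) (d k) + \<tau>min / \<zeta> * Mv"
  proof (rule expectation_le_of_unbiased_quadratic_bound)
    show "0 \<le> delta_q c (x k) \<tau>min (gradf (x k)) (H k) (d k)"
      using delta_q_nonneg_if_tau_le_trial tau_le_trial tau_pos sigma_range \<open>kbar \<le> k\<close>
      by (meson less_imp_le)
    show "delta_q c (x k) \<tau>min (G k w) (H k) (D k w)
        \<le> delta_q c (x k) \<tau>min (gradf (x k)) (H k) (d k) + a \<bullet> (G k w - gradf (x k))
           + \<tau>min / \<zeta> * (norm (G k w - gradf (x k)))\<^sup>2" if "w \<in> space (P k)" for w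
      using a stoch_dir \<open>kbar \<le> k\<close> that by blast
  qed (use G_int G_unbiased G_var_int G_var \<open>kbar \<le> k\<close> tau_pos zeta_pos in auto)
qed

end
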